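(* Let $\beta$ be a basis set in $x_1,\dots,x_r$ such that every non-standard arrow for $\beta$ is translation-equivalent to $0$. Let $x_j$ be a variable and $h$ a positive integer such that some monomial of $\beta$ is divisible by $x_j^h$, and let $\beta_t=\{m : x_j^h m\in\beta\}$ be the $x_j$-truncation of $\beta$ at height $h$. Then every non-standard arrow for $\beta_t$ is translation-equivalent to $0$ (with respect to $\beta_t$).
   Context: Monomials are identified with exponent vectors. A basis set is a finite nonempty set of monomials closed under taking divisors. For a basis set $\gamma$, an arrow for $\gamma$ is a pair $(\mathbf d,\mathbf j)$ with tail $\mathbf x^{\mathbf d}\notin\gamma$ and head $\mathbf x^{\mathbf j}\in\gamma$, written $c^{\mathbf d}_{\mathbf j}$; its vector is $\mathbf j-\mathbf d$; it is standard if the vector has exactly one negative component and non-standard otherwise. A translation step replaces $(\mathbf d,\mathbf j)$ by $(\mathbf d\pm e_i,\mathbf j\pm e_i)$ provided the result is again an arrow for $\gamma$ (nonnegative exponents, head in $\gamma$, tail not in $\gamma$); $\sim$ is the generated equivalence relation. An arrow $c$ is translation-equivalent to $0$ ($c\sim0$) if $c$ is translation-equivalent to an arrow $(\mathbf d',\mathbf j')$ with, for some $i$, $j'_i=0$, $d'_i\ge1$ and $\mathbf x^{\mathbf d'-e_i}\notin\gamma$. *)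

theory Defs
  imports Main
begin

text \<open>Monomials in variables indexed by a finite type 'v are exponent vectors 'v \<Rightarrow> nat.\<close>

type_synonym 'v mon = "'v \<Rightarrow> nat"

definition unitv :: "'v \<Rightarrow> 'v mon" where
  "unitv i = (\<lambda>k. if k = i then 1 else 0)"

definition divides_mon :: "'v mon \<Rightarrow> 'v mon \<Rightarrow> bool" where
  "divides_mon d m \<longleftrightarrow> (\<forall>k. d k \<le> m k)"

definition basis_set :: "'v mon set \<Rightarrow> bool" where
  "basis_set \<gamma> \<longleftrightarrow> finite \<gamma> \<and> \<gamma> \<noteq> {} \<and>
     (\<forall>m\<in>\<gamma>. \<forall>d. divides_mon d m \<longrightarrow> d \<in> \<gamma>)"

text \<open>An arrow c^d_j is the pair (d, j): tail d outside \<gamma>, head j in \<gamma>.\<close>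
definition arrow :: "'v mon set \<Rightarrow> 'v mon \<times> 'v mon \<Rightarrow> bool" where
  "arrow \<gamma> c \<longleftrightarrow> fst c \<notin> \<gamma> \<and> snd c \<in> \<gamma>"

definition standard :: "'v mon \<times> 'v mon \<Rightarrow> bool" where
  "standard c \<longleftrightarrow> (\<exists>!i. snd c i < fst c i)"

definition nonstandard :: "'v mon \<times> 'v mon \<Rightarrow> bool" where
  "nonstandard c \<longleftrightarrow> \<not> standard c"

definition shift_up :: "'v \<Rightarrow> 'v mon \<times> 'v mon \<Rightarrow> 'v mon \<times> 'v mon" where
  "shift_up i c = ((\<lambda>k. fst c k + unitv i k), (\<lambda>k. snd c k + unitv i k))"

definition tstep :: "'v mon set \<Rightarrow> 'v mon \<times> 'v mon \<Rightarrow> 'v mon \<times> 'v mon \<Rightarrow> bool" where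
  "tstep \<gamma> a b \<longleftrightarrow> arrow \<gamma> a \<and> arrow \<gamma> b \<and>
     (\<exists>i. b = shift_up i a \<or> a = shift_up i b)"

definition transl_equiv :: "'v mon set \<Rightarrow> 'v mon \<times> 'v mon \<Rightarrow> 'v mon \<times> 'v mon \<Rightarrow> bool" where
  "transl_equiv \<gamma> = (\<lambda>a b. tstep \<gamma> a b \<or> tstep \<gamma> b a)\<^sup>*\<^sup>*"

definition equiv_zero :: "'v mon set \<Rightarrow> 'v mon \<times> 'v mon \<Rightarrow> bool" where
  "equiv_zero \<gamma> c \<longleftrightarrow> (\<exists>d' j'. transl_equiv \<gamma> c (d', j') \<and>
     (\<exists>i. j' i = 0 \<and> d' i \<ge> 1 \<and> (\<lambda>k. d' k - unitv i k) \<notin> \<gamma>))"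

definition truncation :: "'v mon set \<Rightarrow> 'v \<Rightarrow> nat \<Rightarrow> 'v mon set" where
  "truncation \<beta> j h = {m. (\<lambda>k. m k + h * unitv j k) \<in> \<beta>}"

end

theory Submission
  imports Defs
begin

text \<open>
  Since the truncation at height h+1 is the truncation at height 1 of the truncation at height h,
  and truncations of divisor-closed sets are divisor-closed, it suffices to treat h = 1; write
  T = {m. x_j m \<in> \<beta>} \<subseteq> \<beta>. An arrow c for T lifts to the arrow x_j c for \<beta>, which by
  hypothesis is joined to 0 by a chain of translations for \<beta>. The chain is pushed back down
  to T step by step; it can only fail to come down when it reaches an arrow a for T that is
  also an arrow for \<beta> and has x_j-exponent 0 in its head or tail. If the tail is the larger one
  there, a is already equivalent to 0 for T. Otherwise a' = (tail a, x_j head a) is a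
  non-standard arrow for \<beta>; along a chain for \<beta> joining a' to 0 the head always keeps a larger
  x_j-exponent than the tail, so dividing every head by x_j maps the whole chain to one for T.
\<close>

definition divisor_closed :: "'v mon set \<Rightarrow> bool" where
  "divisor_closed \<gamma> \<longleftrightarrow> (\<forall>m\<in>\<gamma>. \<forall>d. divides_mon d m \<longrightarrow> d \<in> \<gamma>)"

definition nonstandard_equiv_zero :: "'v mon set \<Rightarrow> bool" where
  "nonstandard_equiv_zero \<gamma> \<longleftrightarrow> (\<forall>c. arrow \<gamma> c \<and> nonstandard c \<longrightarrow> equiv_zero \<gamma> c)"

lemma divisor_closed_if_basis_set: "basis_set \<gamma> \<Longrightarrow> divisor_closed \<gamma>"
  by (simp add: basis_set_def divisor_closed_def)

lemma fst_shift_up [simp]: "fst (shift_up i c) = (\<lambda>k. fst c k + unitv i k)"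
  and snd_shift_up [simp]: "snd (shift_up i c) = (\<lambda>k. snd c k + unitv i k)"
  by (simp_all add: shift_up_def)

lemma shift_up_inject: "shift_up i a = shift_up i b \<longleftrightarrow> a = b"
  by (cases a, cases b) (auto simp: shift_up_def fun_eq_iff)

lemma shift_up_commute: "shift_up i (shift_up j a) = shift_up j (shift_up i a)"
  by (auto simp: shift_up_def fun_eq_iff)

lemma nonstandard_shift_up [simp]: "nonstandard (shift_up i a) \<longleftrightarrow> nonstandard a"
  by (simp add: nonstandard_def standard_def)

lemma tstep_sym: "tstep \<gamma> a b \<longleftrightarrow> tstep \<gamma> b a"
  unfolding tstep_def by blast

lemma transl_equiv_eq_rtranclp: "transl_equiv \<gamma> = (tstep \<gamma>)\<^sup>*\<^sup>*"
  unfolding transl_equiv_def by (simp add: tstep_sym[of \<gamma>])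

lemma arrow_if_transl_equiv: "transl_equiv \<gamma> c a \<Longrightarrow> arrow \<gamma> c \<Longrightarrow> arrow \<gamma> a"
  unfolding transl_equiv_eq_rtranclp
  by (induction rule: rtranclp_induct) (auto simp: tstep_def)

lemma nonstandard_tstep_iff: "tstep \<gamma> a b \<Longrightarrow> nonstandard b \<longleftrightarrow> nonstandard a"
  unfolding tstep_def by auto

lemma nonstandard_transl_equiv_iff: "transl_equiv \<gamma> c a \<Longrightarrow> nonstandard a \<longleftrightarrow> nonstandard c"
  unfolding transl_equiv_eq_rtranclp
  by (induction rule: rtranclp_induct) (auto dest: nonstandard_tstep_iff)

lemma equiv_zero_if_transl_equiv:
  "transl_equiv \<gamma> c a \<Longrightarrow> equiv_zero \<gamma> a \<Longrightarrow> equiv_zero \<gamma> c"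
  unfolding equiv_zero_def transl_equiv_def by (meson rtranclp_trans)

lemma rtranclp_map_invariant:
  assumes "r\<^sup>*\<^sup>* x y" and "P x"
    and "\<And>y z. r y z \<Longrightarrow> P y \<Longrightarrow> P z \<and> s (f y) (f z)"
  shows "P y \<and> s\<^sup>*\<^sup>* (f x) (f y)"
  using assms(1)
  by (induction rule: rtranclp_induct)
    (use assms(2,3) in \<open>auto intro: rtranclp.rtrancl_into_rtrancl\<close>)

lemma truncation_0 [simp]: "truncation \<beta> j 0 = \<beta>"
  by (simp add: truncation_def)

lemma truncation_Suc: "truncation \<beta> j (Suc h) = truncation (truncation \<beta> j h) j 1"
  by (auto simp: truncation_def algebra_simps)

lemma divisor_closed_truncation: "divisor_closed \<beta> \<Longrightarrow> divisor_closed (truncation \<beta> j h)"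
  unfolding divisor_closed_def truncation_def divides_mon_def by force

lemma truncation_subset: "divisor_closed \<beta> \<Longrightarrow> truncation \<beta> j h \<subseteq> \<beta>"
  unfolding divisor_closed_def truncation_def divides_mon_def by force

lemma arrow_truncation_one_iff: "arrow (truncation \<beta> j 1) a \<longleftrightarrow> arrow \<beta> (shift_up j a)"
  by (simp add: arrow_def truncation_def)

context
  fixes \<beta> :: "'v mon set" and j :: 'v
  assumes closed: "divisor_closed \<beta>" and nonstd: "nonstandard_equiv_zero \<beta>"
begin

abbreviation (input) T :: "'v mon set" where
  "T \<equiv> truncation \<beta> j 1"

lemma not_in_truncation_if_not_in: "m \<notin> \<beta> \<Longrightarrow> m \<notin> T"
  using truncation_subset[OF closed] by blast

lemma equiv_zero_truncation_if_tail_le_head: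
  assumes aT: "arrow T a" and a\<beta>: "arrow \<beta> a" and ns: "nonstandard a"
    and le: "fst a j \<le> snd a j"
  shows "equiv_zero T a"
proof -
  define lower where "lower z = (fst z, \<lambda>k. snd z k - unitv j k)" for z :: "'v mon \<times> 'v mon"
  define a' where "a' = (fst a, \<lambda>k. snd a k + unitv j k)"
  have "snd a' k < fst a' k \<longleftrightarrow> snd a k < fst a k" for k
    using le by (simp add: a'_def unitv_def)
  then have "nonstandard a'"
    using ns by (simp add: nonstandard_def standard_def)
  moreover have "arrow \<beta> a'"
    using aT a\<beta> by (simp add: a'_def arrow_def truncation_def)
  ultimately obtain d' j' i where chain: "transl_equiv \<beta> a' (d', j')"
    and zero: "j' i = 0" "1 \<le> d' i" "(\<lambda>k. d' k - unitv i k) \<notin> \<beta>"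
    using nonstd unfolding nonstandard_equiv_zero_def equiv_zero_def by blast
  have arrow_lower: "arrow T (lower z)" if "arrow \<beta> z" "fst z j < snd z j" for z
  proof -
    have "(\<lambda>k. snd z k - unitv j k + unitv j k) = snd z"
      using that(2) by (auto simp: unitv_def)
    then show ?thesis
      using that(1) not_in_truncation_if_not_in by (simp add: arrow_def lower_def truncation_def)
  qed
  \<comment> \<open>Translations preserve the vector, so the head keeps the larger x_j-exponent along the chain.\<close>
  have lower_step: "fst z j < snd z j \<and> tstep T (lower y) (lower z)"
    if step: "tstep \<beta> y z" and lt_y: "fst y j < snd y j" for y z
  proof -
    obtain k where k: "z = shift_up k y \<or> y = shift_up k z" and "arrow \<beta> y" "arrow \<beta> z"
      using step unfolding tstep_def by blast
    moreover from k lt_y have lt: "fst z j < snd z j"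
      by (auto simp: unitv_def)
    moreover from k lt_y lt have "lower z = shift_up k (lower y) \<or> lower y = shift_up k (lower z)"
      by (auto simp: lower_def shift_up_def fun_eq_iff unitv_def)
    ultimately show ?thesis
      using lt_y arrow_lower unfolding tstep_def by blast
  qed
  have "fst a' j < snd a' j"
    using le by (simp add: a'_def unitv_def)
  from rtranclp_map_invariant[where P = "\<lambda>z. fst z j < snd z j" and f = lower and s = "tstep T",
      OF chain[unfolded transl_equiv_eq_rtranclp] this lower_step]
  have "d' j < j' j" and "(tstep T)\<^sup>*\<^sup>* (lower a') (lower (d', j'))"
    by simp_all
  moreover have "lower a' = a"
    by (simp add: lower_def a'_def)
  ultimately have "transl_equiv T a (d', \<lambda>k. j' k - unitv j k)"
    by (simp add: transl_equiv_eq_rtranclp lower_def)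
  moreover have "(\<lambda>k. j' k - unitv j k) i = 0"
    using zero(1) by simp
  moreover have "(\<lambda>k. d' k - unitv i k) \<notin> T"
    using zero(3) not_in_truncation_if_not_in by blast
  ultimately show ?thesis
    using zero(2) unfolding equiv_zero_def by blast
qed

lemma equiv_zero_truncation_if_arrow:
  assumes aT: "arrow T a" and a\<beta>: "arrow \<beta> a" and ns: "nonstandard a"
    and zero_at_j: "fst a j = 0 \<or> snd a j = 0"
  shows "equiv_zero T a"
proof (cases "snd a j < fst a j")
  case True
  then have "snd a j = 0" "1 \<le> fst a j"
    using zero_at_j by auto
  moreover have "(\<lambda>k. fst a k - unitv j k + unitv j k) = fst a"
    using True by (auto simp: unitv_def)
  then have "(\<lambda>k. fst a k - unitv j k) \<notin> T"
    using a\<beta> by (simp add: arrow_def truncation_def)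
  moreover have "transl_equiv T a (fst a, snd a)"
    by (simp add: transl_equiv_def)
  ultimately show ?thesis
    unfolding equiv_zero_def by blast
next
  case False
  then show ?thesis
    using equiv_zero_truncation_if_tail_le_head[OF aT a\<beta> ns] by simp
qed

lemma tstep_shift_up_descends:
  assumes aT: "arrow T a" and ns: "nonstandard a" and not_zero: "\<not> equiv_zero T a"
    and step: "tstep \<beta> (shift_up j a) z"
  shows "\<exists>a'. z = shift_up j a' \<and> tstep T a a'"
proof -
  obtain i where "z = shift_up i (shift_up j a) \<or> shift_up j a = shift_up i z"
    and z\<beta>: "arrow \<beta> z"
    using step unfolding tstep_def by blast
  then consider (up) "z = shift_up j (shift_up i a)"
    | (down) "shift_up j a = shift_up i z"
    using shift_up_commute by metis
  then show ?thesis
  proof cases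
    case up
    then show ?thesis
      using aT z\<beta> unfolding tstep_def arrow_truncation_one_iff by blast
  next
    case down
    show ?thesis
    proof (cases "1 \<le> fst z j \<and> 1 \<le> snd z j")
      case True
      define a' where "a' = (\<lambda>k. fst z k - unitv j k, \<lambda>k. snd z k - unitv j k)"
      have z: "z = shift_up j a'"
        using True by (cases z) (auto simp: a'_def shift_up_def fun_eq_iff unitv_def)
      with down have "a = shift_up i a'"
        by (metis shift_up_commute shift_up_inject)
      with aT z z\<beta> show ?thesis
        unfolding tstep_def arrow_truncation_one_iff by blast
    next
      case False
      have "fst z j + unitv i j = fst a j + 1" "snd z j + unitv i j = snd a j + 1"
        using arg_cong[OF down, of "\<lambda>c. fst c j"] arg_cong[OF down, of "\<lambda>c. snd c j"]
        by (simp_all add: unitv_def)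
      with False have "i = j"
        by (auto simp: unitv_def split: if_splits)
      with down have "z = a"
        by (simp add: shift_up_inject)
      moreover from False \<open>z = a\<close> have "fst a j = 0 \<or> snd a j = 0"
        by auto
      ultimately have "equiv_zero T a"
        using equiv_zero_truncation_if_arrow[OF aT _ ns] z\<beta> by simp
      with not_zero show ?thesis
        by blast
    qed
  qed
qed

lemma transl_equiv_shift_up_descends:
  assumes cT: "arrow T c" and ns: "nonstandard c" and not_zero: "\<not> equiv_zero T c"
    and chain: "transl_equiv \<beta> (shift_up j c) z"
  shows "\<exists>a. z = shift_up j a \<and> transl_equiv T c a"
  using chain unfolding transl_equiv_eq_rtranclp
proof (induction rule: rtranclp_induct)
  case (step y z)
  then obtain a where y: "y = shift_up j a" and ca: "(tstep T)\<^sup>*\<^sup>* c a"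
    by blast
  then have "transl_equiv T c a"
    by (simp add: transl_equiv_eq_rtranclp)
  then have "arrow T a" and "nonstandard a" and "\<not> equiv_zero T a"
    using arrow_if_transl_equiv[OF _ cT] nonstandard_transl_equiv_iff[of T c a] ns
      equiv_zero_if_transl_equiv[of T c a] not_zero by auto
  then obtain a' where "z = shift_up j a'" "tstep T a a'"
    using tstep_shift_up_descends step.hyps(2) y by blast
  with ca show ?case
    by (blast intro: rtranclp.rtrancl_into_rtrancl)
qed blast

lemma equiv_zero_truncation_if_shift_up_witness:
  assumes "snd (shift_up j a) i = 0" and "1 \<le> fst (shift_up j a) i"
    and "(\<lambda>k. fst (shift_up j a) k - unitv i k) \<notin> \<beta>"
  shows "equiv_zero T a"
proof -
  have "i \<noteq> j"
    using assms(1) by (auto simp: unitv_def)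
  then have "(\<lambda>k. fst a k - unitv i k + unitv j k) = (\<lambda>k. fst (shift_up j a) k - unitv i k)"
    by (auto simp: fun_eq_iff unitv_def)
  then have "(\<lambda>k. fst a k - unitv i k) \<notin> T"
    using assms(3) by (simp add: truncation_def)
  moreover have "snd a i = 0" and "1 \<le> fst a i"
    using assms(1,2) \<open>i \<noteq> j\<close> by (auto simp: unitv_def)
  moreover have "transl_equiv T a (fst a, snd a)"
    by (simp add: transl_equiv_def)
  ultimately show ?thesis
    unfolding equiv_zero_def by blast
qed

lemma nonstandard_equiv_zero_truncation_one: "nonstandard_equiv_zero T"
  unfolding nonstandard_equiv_zero_def
proof (intro allI impI)
  fix c
  assume "arrow T c \<and> nonstandard c"
  then have cT: "arrow T c" and ns: "nonstandard c"
    by simp_all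
  have "equiv_zero \<beta> (shift_up j c)"
    using nonstd[unfolded nonstandard_equiv_zero_def, rule_format, of "shift_up j c"]
      arrow_truncation_one_iff[THEN iffD1, OF cT] ns
    by simp
  then obtain z i where chain: "transl_equiv \<beta> (shift_up j c) z"
    and zero: "snd z i = 0" "1 \<le> fst z i" "(\<lambda>k. fst z k - unitv i k) \<notin> \<beta>"
    unfolding equiv_zero_def by fastforce
  show "equiv_zero T c"
  proof (rule ccontr)
    assume not_zero: "\<not> equiv_zero T c"
    with cT ns chain obtain a where "z = shift_up j a" and "transl_equiv T c a"
      using transl_equiv_shift_up_descends by blast
    with zero not_zero show False
      using equiv_zero_truncation_if_shift_up_witness equiv_zero_if_transl_equiv by blast
  qed
qed

end

theorem theorem7p2:
  fixes \<beta> :: "('v::finite) mon set" and j :: 'v and h :: nat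
  assumes "basis_set \<beta>"
    and "\<forall>c. arrow \<beta> c \<and> nonstandard c \<longrightarrow> equiv_zero \<beta> c"
    and "h > 0"
    and "\<exists>m\<in>\<beta>. h \<le> m j"
  shows "\<forall>c. arrow (truncation \<beta> j h) c \<and> nonstandard c
           \<longrightarrow> equiv_zero (truncation \<beta> j h) c"
proof -
  have closed: "divisor_closed \<beta>"
    using assms(1) by (rule divisor_closed_if_basis_set)
  have "nonstandard_equiv_zero (truncation \<beta> j n)" for n
  proof (induction n)
    case 0
    show ?case
      using assms(2) unfolding nonstandard_equiv_zero_def by simp
  next
    case (Suc n)
    show ?case
      unfolding truncation_Suc
      by (rule nonstandard_equiv_zero_truncation_one[OF divisor_closed_truncation[OF closed] Suc.IH])
  qed
  then show ?thesis
    unfolding nonstandard_equiv_zero_def .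
qed

end
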